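(* Let $k$ be a field of prime characteristic $p$. Let $H_1=\{x_1^p\}^S$ and $S^{(p)}_1=\{S^{(p)}\}^S$, where $S^{(p)}=S^{(p)}(x_1,\ldots,x_p)=\sum_{\sigma\in\Sigma_p}\prod_{i=1}^p x_{\sigma(i)}$. Then $S^{(p)}_1\subseteq H_1$.
   Context: $X=\{x_1,x_2,\ldots\}$ is countably infinite; $k_0\langle X\rangle$ is the free associative (non-unital) $k$-algebra on $X$. A $T$-space is a $k$-subspace of $k_0\langle X\rangle$ invariant under every algebra endomorphism of $k_0\langle X\rangle$; $\{f\}^S$ is the $T$-space generated by $f$. $\Sigma_p$ is the symmetric group on $p$ letters. *)

theory Defs
  imports Main "HOL-Combinatorics.Permutations" "HOL-Computational_Algebra.Primes"
begin

text \<open>The free associative non-unital k-algebra on X = {x_1, x_2, ...}: elements are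
  finitely supported coefficient functions on words (lists of variable indices),
  with zero coefficient on the empty word. The variable x_i is the index i.\<close>

definition ncpoly :: "(nat list \<Rightarrow> 'k::field) set" where
  "ncpoly = {f. finite {w. f w \<noteq> 0} \<and> f [] = 0}"

definition nc_add :: "(nat list \<Rightarrow> 'k::field) \<Rightarrow> (nat list \<Rightarrow> 'k) \<Rightarrow> (nat list \<Rightarrow> 'k)" where
  "nc_add f g = (\<lambda>w. f w + g w)"

definition nc_smult :: "'k::field \<Rightarrow> (nat list \<Rightarrow> 'k) \<Rightarrow> (nat list \<Rightarrow> 'k)" where
  "nc_smult c f = (\<lambda>w. c * f w)"

definition nc_zero :: "nat list \<Rightarrow> 'k::field" where
  "nc_zero = (\<lambda>w. 0)"

definition nc_mult :: "(nat list \<Rightarrow> 'k::field) \<Rightarrow> (nat list \<Rightarrow> 'k) \<Rightarrow> (nat list \<Rightarrow> 'k)" where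
  "nc_mult f g = (\<lambda>w. \<Sum>i\<le>length w. f (take i w) * g (drop i w))"

definition nc_endo :: "((nat list \<Rightarrow> 'k::field) \<Rightarrow> (nat list \<Rightarrow> 'k)) \<Rightarrow> bool" where
  "nc_endo \<phi> \<longleftrightarrow> \<phi> ` ncpoly \<subseteq> ncpoly
     \<and> (\<forall>f\<in>ncpoly. \<forall>g\<in>ncpoly. \<phi> (nc_add f g) = nc_add (\<phi> f) (\<phi> g))
     \<and> (\<forall>c. \<forall>f\<in>ncpoly. \<phi> (nc_smult c f) = nc_smult c (\<phi> f))
     \<and> (\<forall>f\<in>ncpoly. \<forall>g\<in>ncpoly. \<phi> (nc_mult f g) = nc_mult (\<phi> f) (\<phi> g))"

definition T_space :: "(nat list \<Rightarrow> 'k::field) set \<Rightarrow> bool" where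
  "T_space V \<longleftrightarrow> V \<subseteq> ncpoly \<and> nc_zero \<in> V
     \<and> (\<forall>f\<in>V. \<forall>g\<in>V. nc_add f g \<in> V)
     \<and> (\<forall>c. \<forall>f\<in>V. nc_smult c f \<in> V)
     \<and> (\<forall>\<phi>. nc_endo \<phi> \<longrightarrow> \<phi> ` V \<subseteq> V)"

definition T_gen :: "(nat list \<Rightarrow> 'k::field) \<Rightarrow> (nat list \<Rightarrow> 'k) set" where
  "T_gen f = \<Inter> {V. T_space V \<and> f \<in> V}"

definition nc_monom :: "nat list \<Rightarrow> (nat list \<Rightarrow> 'k::field)" where
  "nc_monom u = (\<lambda>w. if w = u then 1 else 0)"

definition x1_pow :: "nat \<Rightarrow> (nat list \<Rightarrow> 'k::field)" where
  "x1_pow p = nc_monom (replicate p 1)"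

definition S_poly :: "nat \<Rightarrow> (nat list \<Rightarrow> 'k::field)" where
  "S_poly p = (\<lambda>w. \<Sum>\<sigma>\<in>{\<sigma>. \<sigma> permutes {1..p}}. nc_monom (map \<sigma> [1..<p+1]) w)"

end

theory Submission
  imports Defs "HOL-Combinatorics.Multiset_Permutations"
begin

text \<open>
  S^(p) is the full linearisation of x_1^p. For D \<subseteq> {1..p} the endomorphism
  x_1 \<mapsto> \<Sum>i\<in>D. x_i sends x_1^p to the sum of all words of length p in the letters of D.
  Summing these images with signs (-1)^|{1..p} - D|, inclusion-exclusion leaves exactly the words
  in which every letter of {1..p} occurs, i.e. occurs once: their sum is S^(p). The argument works
  over any field.
\<close>

lemma finite_list_all2_right:
  assumes "\<And>j. finite {i. R j i}"
  shows "finite {w. list_all2 R u w}"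
proof (induction u)
  case (Cons a u)
  have "{w. list_all2 R (a # u) w} = (\<lambda>(x, ys). x # ys) ` ({x. R a x} \<times> {ys. list_all2 R u ys})"
    by (auto simp: list_all2_Cons1)
  then show ?case using Cons assms by simp
qed simp

lemma finite_list_all2_left:
  assumes "\<And>i. finite {j. R j i}"
  shows "finite {u. list_all2 R u w}"
  using finite_list_all2_right[of "\<lambda>i j. R j i" w] assms
  by (simp add: list_all2_conv_all_nth conj_commute eq_commute cong: conj_cong)

lemma bij_betw_take_drop_list_all2:
  assumes "i \<le> length w"
  shows "bij_betw (\<lambda>u. (take i u, drop i u)) {u. list_all2 R u w}
           ({a. list_all2 R a (take i w)} \<times> {b. list_all2 R b (drop i w)})"
proof (rule bij_betw_byWitness[where f' = "\<lambda>(a, b). a @ b"])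
  show "\<forall>ab \<in> {a. list_all2 R a (take i w)} \<times> {b. list_all2 R b (drop i w)}.
          (\<lambda>u. (take i u, drop i u)) ((\<lambda>(a, b). a @ b) ab) = ab"
    using assms by (auto dest: list_all2_lengthD)
  show "(\<lambda>(a, b). a @ b) ` ({a. list_all2 R a (take i w)} \<times> {b. list_all2 R b (drop i w)})
          \<subseteq> {u. list_all2 R u w}"
    by (auto dest: list_all2_appendI)
qed (auto intro: list_all2_takeI list_all2_dropI)

lemma list_all2_replicate_left_iff:
  "list_all2 P (replicate n x) w \<longleftrightarrow> length w = n \<and> (\<forall>y\<in>set w. P x y)"
  by (auto simp: list_all2_conv_all_nth in_set_conv_nth dest: nth_mem)

lemma prod_of_bool:
  assumes "finite A"
  shows "(\<Prod>x\<in>A. of_bool (P x)) = (of_bool (\<forall>x\<in>A. P x) :: 'a::comm_semiring_1)"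
  using assms by (induction A rule: finite_induct) auto

lemma sum_Pow_of_bool_disjoint:
  assumes "finite S"
  shows "(\<Sum>X\<in>Pow S. (-1) ^ card X * of_bool (X \<inter> W = {})) = (of_bool (S \<subseteq> W) :: 'a::comm_ring_1)"
proof -
  have "(of_bool (S \<subseteq> W) :: 'a) = (\<Prod>x\<in>S. of_bool (x \<in> W))"
    unfolding prod_of_bool[OF assms] by auto
  also have "\<dots> = (\<Prod>x\<in>S. 1 - of_bool (x \<notin> W))"
    by (intro prod.cong) auto
  also have "\<dots> = (\<Sum>X\<in>Pow S. (-1) ^ card X * (\<Prod>x\<in>X. of_bool (x \<notin> W)) * (\<Prod>x\<in>S-X. 1))"
    by (rule prod_diff_conv_sum[OF assms])
  also have "\<dots> = (\<Sum>X\<in>Pow S. (-1) ^ card X * of_bool (X \<inter> W = {}))"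
    using assms by (intro sum.cong) (auto simp: prod_of_bool finite_subset disjoint_iff)
  finally show ?thesis ..
qed

lemma permutations_of_set_iff_length:
  "xs \<in> permutations_of_set A \<longleftrightarrow> length xs = card A \<and> set xs = A"
  unfolding permutations_of_set_def by (auto simp: distinct_card intro: card_distinct)

lemma permutations_of_set_inclusion_exclusion:
  assumes "finite S"
  shows "(\<Sum>C\<in>Pow S. (-1) ^ card C * of_bool (length w = card S \<and> set w \<subseteq> S - C))
       = (of_bool (w \<in> permutations_of_set S) :: 'a::comm_ring_1)"
proof (cases "length w = card S \<and> set w \<subseteq> S")
  case True
  have "(\<Sum>C\<in>Pow S. (-1) ^ card C * of_bool (length w = card S \<and> set w \<subseteq> S - C))
      = (\<Sum>C\<in>Pow S. (-1) ^ card C * of_bool (C \<inter> set w = {}) :: 'a)"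
    using True by (intro sum.cong) auto
  also have "\<dots> = of_bool (S \<subseteq> set w)"
    by (rule sum_Pow_of_bool_disjoint[OF assms])
  also have "S \<subseteq> set w \<longleftrightarrow> w \<in> permutations_of_set S"
    using True by (auto simp: permutations_of_set_iff_length)
  finally show ?thesis .
next
  case False
  have "(\<Sum>C\<in>Pow S. (-1) ^ card C * of_bool (length w = card S \<and> set w \<subseteq> S - C)) = (0::'a)"
    using False by (intro sum.neutral) auto
  moreover have "w \<notin> permutations_of_set S"
    using False by (auto simp: permutations_of_set_iff_length)
  ultimately show ?thesis by simp
qed

lemma bij_betw_map_permutes:
  assumes "distinct xs"
  shows "bij_betw (\<lambda>\<sigma>. map \<sigma> xs) {\<sigma>. \<sigma> permutes set xs} (permutations_of_set (set xs))"
proof -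
  have inj: "inj_on (\<lambda>\<sigma>. map \<sigma> xs) {\<sigma>. \<sigma> permutes set xs}"
  proof (rule inj_onI)
    fix \<sigma> \<tau> assume "\<sigma> \<in> {\<sigma>. \<sigma> permutes set xs}" "\<tau> \<in> {\<sigma>. \<sigma> permutes set xs}" "map \<sigma> xs = map \<tau> xs"
    then show "\<sigma> = \<tau>" by (metis map_eq_conv mem_Collect_eq permutes_not_in ext)
  qed
  have sub: "(\<lambda>\<sigma>. map \<sigma> xs) ` {\<sigma>. \<sigma> permutes set xs} \<subseteq> permutations_of_set (set xs)"
    using assms by (auto simp: permutations_of_set_def permutes_image distinct_map permutes_inj_on)
  have "card ((\<lambda>\<sigma>. map \<sigma> xs) ` {\<sigma>. \<sigma> permutes set xs}) = card (permutations_of_set (set xs))"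
    using card_image[OF inj] by (simp add: card_permutations)
  then have "(\<lambda>\<sigma>. map \<sigma> xs) ` {\<sigma>. \<sigma> permutes set xs} = permutations_of_set (set xs)"
    using sub by (intro card_subset_eq) auto
  with inj show ?thesis by (simp add: bij_betw_def)
qed

text \<open>The substitution x_j \<mapsto> \<Sum>{x_i | R j i}: the coefficient of w in the image of f is the sum
  of the coefficients of all words u mapped letterwise onto w by R.\<close>
definition nc_subst :: "(nat \<Rightarrow> nat \<Rightarrow> bool) \<Rightarrow> (nat list \<Rightarrow> 'k::field) \<Rightarrow> (nat list \<Rightarrow> 'k)" where
  "nc_subst R f = (\<lambda>w. \<Sum>u | list_all2 R u w. f u)"

lemma nc_subst_nc_mult:
  assumes "\<And>i. finite {j. R j i}"
  shows "nc_subst R (nc_mult f g) = nc_mult (nc_subst R f) (nc_subst R g)"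
proof
  fix w
  let ?U = "\<lambda>w. {u. list_all2 R u w}"
  have "nc_subst R (nc_mult f g) w = (\<Sum>u\<in>?U w. \<Sum>i\<le>length w. f (take i u) * g (drop i u))"
    unfolding nc_subst_def nc_mult_def by (rule sum.cong) (auto dest: list_all2_lengthD)
  also have "\<dots> = (\<Sum>i\<le>length w. \<Sum>u\<in>?U w. f (take i u) * g (drop i u))"
    by (rule sum.swap)
  also have "\<dots> = (\<Sum>i\<le>length w. \<Sum>(a, b)\<in>?U (take i w) \<times> ?U (drop i w). f a * g b)"
  proof (rule sum.cong[OF refl])
    fix i assume "i \<in> {..length w}"
    then show "(\<Sum>u\<in>?U w. f (take i u) * g (drop i u))
        = (\<Sum>(a, b)\<in>?U (take i w) \<times> ?U (drop i w). f a * g b)"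
      using sum.reindex_bij_betw[OF bij_betw_take_drop_list_all2[of i w R], of "\<lambda>(a, b). f a * g b"]
      by simp
  qed
  also have "\<dots> = nc_mult (nc_subst R f) (nc_subst R g) w"
    unfolding nc_mult_def nc_subst_def sum_product sum.cartesian_product by (simp add: split_def)
  finally show "nc_subst R (nc_mult f g) w = nc_mult (nc_subst R f) (nc_subst R g) w" .
qed

lemma nc_endo_nc_subst:
  assumes "\<And>j. finite {i. R j i}" and "\<And>i. finite {j. R j i}"
  shows "nc_endo (nc_subst R :: (nat list \<Rightarrow> 'k::field) \<Rightarrow> _)"
  unfolding nc_endo_def
proof (intro conjI ballI allI subsetI)
  fix h :: "nat list \<Rightarrow> 'k" assume "h \<in> nc_subst R ` ncpoly"
  then obtain f where f: "f \<in> ncpoly" and h: "h = nc_subst R f" by blast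
  have "{w. h w \<noteq> 0} \<subseteq> (\<Union>u\<in>{u. f u \<noteq> 0}. {w. list_all2 R u w})"
    unfolding h nc_subst_def by (auto elim: sum.not_neutral_contains_not_neutral)
  moreover have "finite (\<Union>u\<in>{u. f u \<noteq> 0}. {w. list_all2 R u w})"
    using f finite_list_all2_right[OF assms(1)] by (auto simp: ncpoly_def)
  moreover have "h [] = 0"
    using f by (simp add: h nc_subst_def ncpoly_def)
  ultimately show "h \<in> ncpoly"
    by (auto simp: ncpoly_def intro: finite_subset)
next
  fix c :: 'k and f g :: "nat list \<Rightarrow> 'k"
  show "nc_subst R (nc_add f g) = nc_add (nc_subst R f) (nc_subst R g)"
    by (simp add: nc_subst_def nc_add_def sum.distrib)
  show "nc_subst R (nc_smult c f) = nc_smult c (nc_subst R f)"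
    by (simp add: nc_subst_def nc_smult_def sum_distrib_left)
  show "nc_subst R (nc_mult f g) = nc_mult (nc_subst R f) (nc_subst R g)"
    by (rule nc_subst_nc_mult[OF assms(2)])
qed

lemma nc_subst_nc_monom:
  assumes "\<And>i. finite {j. R j i}"
  shows "nc_subst R (nc_monom u) w = (of_bool (list_all2 R u w) :: 'k::field)"
  using finite_list_all2_left[of R w] assms
  by (simp add: nc_subst_def nc_monom_def of_bool_def sum.delta)

definition x1_to_sum :: "nat set \<Rightarrow> nat \<Rightarrow> nat \<Rightarrow> bool" where
  "x1_to_sum D j i \<longleftrightarrow> (if j = 1 then i \<in> D else i = j)"

lemma nc_endo_x1_to_sum:
  "finite D \<Longrightarrow> nc_endo (nc_subst (x1_to_sum D) :: (nat list \<Rightarrow> 'k::field) \<Rightarrow> _)"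
  by (rule nc_endo_nc_subst)
    (auto simp: x1_to_sum_def intro: finite_subset[of _ "insert _ D"] finite_subset[of _ "{1, _}"])

lemma nc_subst_x1_to_sum_x1_pow:
  "nc_subst (x1_to_sum D) (x1_pow p) w = (of_bool (length w = p \<and> set w \<subseteq> D) :: 'k::field)"
proof -
  have "finite {j. x1_to_sum D j i}" for i
    by (rule finite_subset[of _ "{1, i}"]) (auto simp: x1_to_sum_def)
  then show ?thesis
    by (auto simp: x1_pow_def nc_subst_nc_monom list_all2_replicate_left_iff x1_to_sum_def)
qed

lemma S_poly_eq_of_bool:
  "S_poly p w = (of_bool (w \<in> permutations_of_set {1..p}) :: 'k::field)"
proof -
  have set_L: "set [1..<p+1] = {1..p}"
    by (simp add: atLeastLessThanSuc_atLeastAtMost del: upt_Suc)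
  have bij: "bij_betw (\<lambda>\<sigma>. map \<sigma> [1..<p+1]) {\<sigma>. \<sigma> permutes {1..p}} (permutations_of_set {1..p})"
    using bij_betw_map_permutes[of "[1..<p+1]"] unfolding set_L by simp
  have "S_poly p w = (\<Sum>\<sigma>\<in>{\<sigma>. \<sigma> permutes {1..p}}. of_bool (w = map \<sigma> [1..<p+1]) :: 'k)"
    unfolding S_poly_def nc_monom_def of_bool_def ..
  also have "\<dots> = (\<Sum>ys\<in>permutations_of_set {1..p}. of_bool (w = ys))"
    by (rule sum.reindex_bij_betw[OF bij])
  also have "\<dots> = of_bool (w \<in> permutations_of_set {1..p})"
    by (simp add: of_bool_def sum.delta)
  finally show ?thesis .
qed

lemma S_poly_eq_alternating_sum:
  "S_poly p = (\<lambda>w. \<Sum>C\<in>Pow {1..p}. (-1) ^ card C * nc_subst (x1_to_sum ({1..p} - C)) (x1_pow p) w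
                 :: 'k::field)"
proof
  fix w
  show "S_poly p w = (\<Sum>C\<in>Pow {1..p}. (-1) ^ card C * nc_subst (x1_to_sum ({1..p} - C)) (x1_pow p) w :: 'k)"
    using permutations_of_set_inclusion_exclusion[where S = "{1..p}" and w = w, OF finite_atLeastAtMost]
    unfolding S_poly_eq_of_bool nc_subst_x1_to_sum_x1_pow card_atLeastAtMost diff_Suc_1
    by (rule sym)
qed

lemma T_space_sum:
  assumes "T_space V" and "finite I" and "\<And>i. i \<in> I \<Longrightarrow> g i \<in> V"
  shows "(\<lambda>w. \<Sum>i\<in>I. g i w) \<in> V"
  using assms(2,3)
proof (induction I rule: finite_induct)
  case empty
  then show ?case using assms(1) by (simp add: T_space_def nc_zero_def)
next
  case (insert x F)
  then have "nc_add (g x) (\<lambda>w. \<Sum>i\<in>F. g i w) \<in> V"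
    using assms(1) by (simp add: T_space_def)
  then show ?case using insert by (simp add: nc_add_def)
qed

lemma T_gen_subset_T_gen:
  assumes "\<And>V. T_space V \<Longrightarrow> g \<in> V \<Longrightarrow> f \<in> V"
  shows "T_gen f \<subseteq> T_gen g"
  unfolding T_gen_def using assms by blast

lemma S_poly_mem_T_space:
  assumes V: "T_space V" and x1_pow: "x1_pow p \<in> V"
  shows "(S_poly p :: nat list \<Rightarrow> 'k::field) \<in> V"
proof -
  have "nc_smult ((-1) ^ card C) (nc_subst (x1_to_sum ({1..p} - C)) (x1_pow p)) \<in> V" for C
    using V x1_pow nc_endo_x1_to_sum[of "{1..p} - C", where 'k = 'k] unfolding T_space_def by blast
  then have "(\<lambda>w. \<Sum>C\<in>Pow {1..p}.
      nc_smult ((-1) ^ card C) (nc_subst (x1_to_sum ({1..p} - C)) (x1_pow p)) w) \<in> V"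
    by (intro T_space_sum[OF V]) auto
  then show ?thesis
    by (simp only: S_poly_eq_alternating_sum nc_smult_def)
qed

theorem corollary4p1:
  fixes p :: nat
  assumes "prime p" and "CHAR('k::field) = p"
  shows "T_gen (S_poly p :: nat list \<Rightarrow> 'k) \<subseteq> T_gen (x1_pow p :: nat list \<Rightarrow> 'k)"
  by (rule T_gen_subset_T_gen) (rule S_poly_mem_T_space)

end
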